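(* Let $\mathcal T$ be a theory of $\mathsf{LGIM}$ consisting of generalised graded implications and let $\zeta_1,\dots,\zeta_n\Rightarrow_e\eta$ be a generalised graded implication. If $\mathcal T\models\zeta_1,\dots,\zeta_n\Rightarrow_e\eta$, then $\mathcal T\vdash_{\mathsf{LGIM}}\zeta_1,\dots,\zeta_n\Rightarrow_t\eta$ for every $t\in[0,1]$ with $t<e$.
   Context: Fix a continuous t-norm $\odot$ on $[0,1]$ and let $c\oplus d = 1-((1-c)\odot(1-d))$. Write $c\odot_{\L} d=\max(c+d-1,0)$, $c\oplus_{\L} d=\min(c+d,1)$, and $\mathrm{avg}(r_1,\dots,r_n)=(r_1+\dots+r_n)/n$. Basic expressions: built from countably many variables $\phi_0,\phi_1,\dots$ and constants $\bot,\top$ by binary $\land,\lor,\odot$ and unary $\sim$. A generalised graded implication is written $\alpha_1,\dots,\alpha_n\Rightarrow_c\beta$ where $n\ge1$, $\alpha_1,\dots,\alpha_n$ is a multiset of basic expressions, $\beta$ a basic expression, $c\in[0,1]$; for $n=1$ it is a graded implication $\alpha\Rightarrow_c\beta$. Formulas of $\mathsf{LGIM}$ are built from generalised graded implications by classical $\land,\lor,\lnot$; $\Phi\to\Psi$ abbreviates $\lnot\Phi\lor\Psi$. A theory is a set of formulas. Semantics: an evaluation is a map $v$ from basic expressions to $[0,1]$ with $v(\bot)=0$, $v(\top)=1$, interpreting $\land$ by min, $\lor$ by max, $\odot$ by the t-norm, $\sim$ by $x\mapsto1-x$. $v$ satisfies $\alpha_1,\dots,\alpha_n\Rightarrow_c\beta$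 iff $\mathrm{avg}(v(\alpha_1),\dots,v(\alpha_n))\le v(\beta)+1-c$; satisfaction extends classically; $\mathcal T\models\Phi$ means every evaluation satisfying all of $\mathcal T$ satisfies $\Phi$. Calculus $\mathsf{LGIM}$: axioms are (i) all substitution instances (by generalised graded implications) of classical propositional tautologies; (ii) for all basic expressions $\alpha,\beta,\gamma$ and $c,d\in[0,1]$: ($\land_1$) $(\alpha\Rightarrow_d\beta)\land(\alpha\Rightarrow_d\gamma)\to(\alpha\Rightarrow_d\beta\land\gamma)$; ($\land_2$) $\alpha\land\beta\Rightarrow_1\alpha$; ($\land_3$) $\alpha\land\beta\Rightarrow_1\beta$; ($\lor_1$) $(\alpha\Rightarrow_d\gamma)\land(\beta\Rightarrow_d\gamma)\to(\alpha\lor\beta\Rightarrow_d\gamma)$; ($\lor_2$) $\alpha\Rightarrow_1\alpha\lor\beta$; ($\lor_3$) $\beta\Rightarrow_1\alpha\lor\beta$; ($\odot_1$) $(\top\Rightarrow_c\alpha)\land(\top\Rightarrow_d\beta)\to(\top\Rightarrow_{c\odot d}\alpha\odot\beta)$; ($\odot_2$) $(\alpha\Rightarrow_c\bot)\land(\beta\Rightarrow_d\bot)\to(\alpha\odot\beta\Rightarrow_{c\oplus d}\bot)$; ($\odot_3$) $\top\Rightarrow_1\top\odot\top$; ($\sim_1$) $(\alpha\Rightarrow_d\beta)\to(\sim\beta\Rightarrow_d\sim\alpha)$; ($\sim_2$) $\sim\sim\alpha\Rightarrow_1\alpha$; ($\sim_3$) $\alpha\Rightarrow_1\sim\sim\alpha$;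 ($\top$) $\alpha\Rightarrow_1\top$; ($\bot$) $\bot\Rightarrow_1\alpha$; (0) $\alpha\Rightarrow_0\beta$; ($c$) $\alpha\Rightarrow_c\alpha$; (inkons) $\lnot(\top\Rightarrow_c\bot)$ for $c>0$; (trans$_1$) $(\alpha\Rightarrow_c\beta)\land(\beta\Rightarrow_d\gamma)\to(\alpha\Rightarrow_{c\odot_{\L}d}\gamma)$; (trans$_2$) $(\alpha\Rightarrow_c\bot)\land(\top\Rightarrow_d\beta)\to(\alpha\Rightarrow_{c\oplus_{\L}d}\beta)$; (lin$_1$) $(\alpha\Rightarrow_1\beta)\lor(\beta\Rightarrow_1\alpha)$; (lin$_2$) $(\top\Rightarrow_d\alpha)\lor(\alpha\Rightarrow_{1-d}\bot)$; (iii) for all basic expressions $\alpha,\alpha_i,\beta_i,\beta,\gamma$ and $c,c_i,d\in[0,1]$: (trans$\varnothing_1$) $(\alpha_1\Rightarrow_{c_1}\beta_1)\land\dots\land(\alpha_n\Rightarrow_{c_n}\beta_n)\land(\beta_1,\dots,\beta_n\Rightarrow_d\gamma)\to(\alpha_1,\dots,\alpha_n\Rightarrow_{\mathrm{avg}(c_1,\dots,c_n)\odot_{\L}d}\gamma)$; (trans$\varnothing_2$) $(\alpha_1,\dots,\alpha_n\Rightarrow_c\beta)\land(\beta\Rightarrow_d\gamma)\to(\alpha_1,\dots,\alpha_n\Rightarrow_{c\odot_{\L}d}\gamma)$; (trans$\varnothing_3$) $(\alpha_1\Rightarrow_{c_1}\bot)\land\dots\land(\alpha_n\Rightarrow_{c_n}\bot)\land(\top\Rightarrow_d\beta)\to(\alpha_1,\dots,\alpha_n\Rightarrow_{\mathrm{avg}(c_1,\dots,c_n)\oplus_{\L}d}\beta)$;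 ($\top\varnothing$) $(\top,\dots,\top\Rightarrow_c\alpha)\to(\top\Rightarrow_c\alpha)$. The only rule is modus ponens. $\mathcal T\vdash_{\mathsf{LGIM}}\Phi$ means $\Phi$ has a finite derivation from axioms and elements of $\mathcal T$ by modus ponens. *)

theory Defs
  imports "HOL-Analysis.Analysis" "HOL-Library.Multiset"
begin

definition cont_tnorm :: "(real \<Rightarrow> real \<Rightarrow> real) \<Rightarrow> bool" where
  "cont_tnorm tn \<longleftrightarrow>
     (\<forall>x\<in>{0..1}. \<forall>y\<in>{0..1}. tn x y \<in> {0..1}) \<and>
     (\<forall>x\<in>{0..1}. \<forall>y\<in>{0..1}. tn x y = tn y x) \<and>
     (\<forall>x\<in>{0..1}. \<forall>y\<in>{0..1}. \<forall>z\<in>{0..1}. tn (tn x y) z = tn x (tn y z)) \<and>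
     (\<forall>x\<in>{0..1}. \<forall>y\<in>{0..1}. \<forall>z\<in>{0..1}. y \<le> z \<longrightarrow> tn x y \<le> tn x z) \<and>
     (\<forall>x\<in>{0..1}. tn x 1 = x) \<and>
     continuous_on ({0..1} \<times> {0..1}) (\<lambda>(x, y). tn x y)"

definition tconorm :: "(real \<Rightarrow> real \<Rightarrow> real) \<Rightarrow> real \<Rightarrow> real \<Rightarrow> real" where
  "tconorm tn c d = 1 - tn (1 - c) (1 - d)"

definition luk_t :: "real \<Rightarrow> real \<Rightarrow> real" where
  "luk_t c d = max (c + d - 1) 0"

definition luk_s :: "real \<Rightarrow> real \<Rightarrow> real" where
  "luk_s c d = min (c + d) 1"

definition avg_list :: "real list \<Rightarrow> real" where
  "avg_list xs = sum_list xs / real (length xs)"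

definition avg_mset :: "real multiset \<Rightarrow> real" where
  "avg_mset X = sum_mset X / real (size X)"

datatype bexp = Var nat | Bot | Top | And bexp bexp | Or bexp bexp | Odot bexp bexp | Neg bexp

text \<open>Formulas of LGIM; GImp M c b is the generalised graded implication
  with antecedent multiset M, grade c and consequent b.\<close>
datatype fm = GImp "bexp multiset" real bexp | FAnd fm fm | FOr fm fm | FNot fm

definition G1 :: "bexp \<Rightarrow> real \<Rightarrow> bexp \<Rightarrow> fm" where
  "G1 a c b = GImp {#a#} c b"

definition Imp :: "fm \<Rightarrow> fm \<Rightarrow> fm" where
  "Imp A B = FOr (FNot A) B"

fun Conjs :: "fm list \<Rightarrow> fm \<Rightarrow> fm" where
  "Conjs [] B = B"
| "Conjs (A # As) B = FAnd A (Conjs As B)"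

fun wf_fm :: "fm \<Rightarrow> bool" where
  "wf_fm (GImp M c b) \<longleftrightarrow> M \<noteq> {#} \<and> 0 \<le> c \<and> c \<le> 1"
| "wf_fm (FAnd A B) \<longleftrightarrow> wf_fm A \<and> wf_fm B"
| "wf_fm (FOr A B) \<longleftrightarrow> wf_fm A \<and> wf_fm B"
| "wf_fm (FNot A) \<longleftrightarrow> wf_fm A"

fun peval :: "(bexp multiset \<Rightarrow> real \<Rightarrow> bexp \<Rightarrow> bool) \<Rightarrow> fm \<Rightarrow> bool" where
  "peval I (GImp M c b) = I M c b"
| "peval I (FAnd A B) = (peval I A \<and> peval I B)"
| "peval I (FOr A B) = (peval I A \<or> peval I B)"
| "peval I (FNot A) = (\<not> peval I A)"

text \<open>Substitution instances of classical tautologies = formulas true under every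
  boolean assignment to their generalised graded implications.\<close>
definition taut :: "fm \<Rightarrow> bool" where
  "taut A \<longleftrightarrow> (\<forall>I. peval I A)"

fun beval :: "(real \<Rightarrow> real \<Rightarrow> real) \<Rightarrow> (nat \<Rightarrow> real) \<Rightarrow> bexp \<Rightarrow> real" where
  "beval tn v (Var i) = v i"
| "beval tn v Bot = 0"
| "beval tn v Top = 1"
| "beval tn v (And a b) = min (beval tn v a) (beval tn v b)"
| "beval tn v (Or a b) = max (beval tn v a) (beval tn v b)"
| "beval tn v (Odot a b) = tn (beval tn v a) (beval tn v b)"
| "beval tn v (Neg a) = 1 - beval tn v a"

fun sat :: "(real \<Rightarrow> real \<Rightarrow> real) \<Rightarrow> (nat \<Rightarrow> real) \<Rightarrow> fm \<Rightarrow> bool" where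
  "sat tn v (GImp M c b) \<longleftrightarrow>
     avg_mset (image_mset (beval tn v) M) \<le> beval tn v b + 1 - c"
| "sat tn v (FAnd A B) = (sat tn v A \<and> sat tn v B)"
| "sat tn v (FOr A B) = (sat tn v A \<or> sat tn v B)"
| "sat tn v (FNot A) = (\<not> sat tn v A)"

definition valuation :: "(nat \<Rightarrow> real) \<Rightarrow> bool" where
  "valuation v \<longleftrightarrow> (\<forall>i. 0 \<le> v i \<and> v i \<le> 1)"

definition entails :: "(real \<Rightarrow> real \<Rightarrow> real) \<Rightarrow> fm set \<Rightarrow> fm \<Rightarrow> bool" where
  "entails tn T A \<longleftrightarrow> (\<forall>v. valuation v \<longrightarrow> (\<forall>B\<in>T. sat tn v B) \<longrightarrow> sat tn v A)"

inductive lgim_ax :: "(real \<Rightarrow> real \<Rightarrow> real) \<Rightarrow> fm \<Rightarrow> bool" for tn where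
  taut: "wf_fm A \<Longrightarrow> taut A \<Longrightarrow> lgim_ax tn A"
| and1: "0 \<le> d \<Longrightarrow> d \<le> 1 \<Longrightarrow>
    lgim_ax tn (Imp (FAnd (G1 a d b) (G1 a d g)) (G1 a d (And b g)))"
| and2: "lgim_ax tn (G1 (And a b) 1 a)"
| and3: "lgim_ax tn (G1 (And a b) 1 b)"
| or1: "0 \<le> d \<Longrightarrow> d \<le> 1 \<Longrightarrow>
    lgim_ax tn (Imp (FAnd (G1 a d g) (G1 b d g)) (G1 (Or a b) d g))"
| or2: "lgim_ax tn (G1 a 1 (Or a b))"
| or3: "lgim_ax tn (G1 b 1 (Or a b))"
| odot1: "0 \<le> c \<Longrightarrow> c \<le> 1 \<Longrightarrow> 0 \<le> d \<Longrightarrow> d \<le> 1 \<Longrightarrow>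
    lgim_ax tn (Imp (FAnd (G1 Top c a) (G1 Top d b)) (G1 Top (tn c d) (Odot a b)))"
| odot2: "0 \<le> c \<Longrightarrow> c \<le> 1 \<Longrightarrow> 0 \<le> d \<Longrightarrow> d \<le> 1 \<Longrightarrow>
    lgim_ax tn (Imp (FAnd (G1 a c Bot) (G1 b d Bot)) (G1 (Odot a b) (tconorm tn c d) Bot))"
| odot3: "lgim_ax tn (G1 Top 1 (Odot Top Top))"
| neg1: "0 \<le> d \<Longrightarrow> d \<le> 1 \<Longrightarrow> lgim_ax tn (Imp (G1 a d b) (G1 (Neg b) d (Neg a)))"
| neg2: "lgim_ax tn (G1 (Neg (Neg a)) 1 a)"
| neg3: "lgim_ax tn (G1 a 1 (Neg (Neg a)))"
| top: "lgim_ax tn (G1 a 1 Top)"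
| bot: "lgim_ax tn (G1 Bot 1 a)"
| zero: "lgim_ax tn (G1 a 0 b)"
| refl: "0 \<le> c \<Longrightarrow> c \<le> 1 \<Longrightarrow> lgim_ax tn (G1 a c a)"
| inkons: "0 < c \<Longrightarrow> c \<le> 1 \<Longrightarrow> lgim_ax tn (FNot (G1 Top c Bot))"
| trans1: "0 \<le> c \<Longrightarrow> c \<le> 1 \<Longrightarrow> 0 \<le> d \<Longrightarrow> d \<le> 1 \<Longrightarrow>
    lgim_ax tn (Imp (FAnd (G1 a c b) (G1 b d g)) (G1 a (luk_t c d) g))"
| trans2: "0 \<le> c \<Longrightarrow> c \<le> 1 \<Longrightarrow> 0 \<le> d \<Longrightarrow> d \<le> 1 \<Longrightarrow>
    lgim_ax tn (Imp (FAnd (G1 a c Bot) (G1 Top d b)) (G1 a (luk_s c d) b))"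
| lin1: "lgim_ax tn (FOr (G1 a 1 b) (G1 b 1 a))"
| lin2: "0 \<le> d \<Longrightarrow> d \<le> 1 \<Longrightarrow> lgim_ax tn (FOr (G1 Top d a) (G1 a (1 - d) Bot))"
| transM1: "length as = n \<Longrightarrow> length bs = n \<Longrightarrow> length cs = n \<Longrightarrow> 1 \<le> n \<Longrightarrow>
    (\<forall>c\<in>set cs. 0 \<le> c \<and> c \<le> 1) \<Longrightarrow> 0 \<le> d \<Longrightarrow> d \<le> 1 \<Longrightarrow>
    lgim_ax tn (Imp (Conjs (map (\<lambda>(a, c, b). G1 a c b) (zip as (zip cs bs)))
                          (GImp (mset bs) d g))
                    (GImp (mset as) (luk_t (avg_list cs) d) g))"
| transM2: "M \<noteq> {#} \<Longrightarrow> 0 \<le> c \<Longrightarrow> c \<le> 1 \<Longrightarrow> 0 \<le> d \<Longrightarrow> d \<le> 1 \<Longrightarrow>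
    lgim_ax tn (Imp (FAnd (GImp M c b) (G1 b d g)) (GImp M (luk_t c d) g))"
| transM3: "length as = n \<Longrightarrow> length cs = n \<Longrightarrow> 1 \<le> n \<Longrightarrow>
    (\<forall>c\<in>set cs. 0 \<le> c \<and> c \<le> 1) \<Longrightarrow> 0 \<le> d \<Longrightarrow> d \<le> 1 \<Longrightarrow>
    lgim_ax tn (Imp (Conjs (map (\<lambda>(a, c). G1 a c Bot) (zip as cs)) (G1 Top d b))
                    (GImp (mset as) (luk_s (avg_list cs) d) b))"
| topM: "1 \<le> n \<Longrightarrow> 0 \<le> c \<Longrightarrow> c \<le> 1 \<Longrightarrow>
    lgim_ax tn (Imp (GImp (replicate_mset n Top) c a) (G1 Top c a))"

inductive derivable :: "(real \<Rightarrow> real \<Rightarrow> real) \<Rightarrow> fm set \<Rightarrow> fm \<Rightarrow> bool" for tn T where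
  ax: "lgim_ax tn A \<Longrightarrow> derivable tn T A"
| hyp: "A \<in> T \<Longrightarrow> derivable tn T A"
| mp: "derivable tn T A \<Longrightarrow> derivable tn T (Imp A B) \<Longrightarrow> derivable tn T B"

end

theory Submission
  imports Defs
begin

text \<open>
  A canonical-model argument. If the implication with grade t is not derivable from T, extend
  T (Zorn, using that derivations are finite) to a maximal set \<Gamma> of well-formed formulas that
  still does not derive it; \<Gamma> is deductively closed and prime. Evaluate a basic expression a
  by the supremum v(a) of the grades d with (Top \<Rightarrow> a, grade d) in \<Gamma>. The axioms for the
  connectives make v an evaluation (continuity of the t-norm is needed for \<odot>), and the
  transitivity axioms for generalised implications show that v satisfies every implication in \<Gamma>
  and, conversely, that \<Gamma> contains every implication satisfied by v, at any strictly smaller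
  grade. As T \<subseteq> \<Gamma>, v satisfies T and hence the implication with grade e, which puts the one with
  grade t < e into \<Gamma>: a contradiction.
\<close>

section \<open>Averages and continuity on the unit square\<close>

lemma luk_t_one [simp]:
  "0 \<le> d \<Longrightarrow> luk_t d 1 = d"
  "0 \<le> d \<Longrightarrow> luk_t 1 d = d"
  by (auto simp: luk_t_def)

lemma avg_list_bounds:
  assumes "\<forall>c\<in>set cs. 0 \<le> c \<and> c \<le> 1" "cs \<noteq> []"
  shows "0 \<le> avg_list cs" "avg_list cs \<le> 1"
proof -
  have "sum_list cs \<le> sum_list (map (\<lambda>_. 1::real) cs)"
    using sum_list_mono[of cs "\<lambda>x. x" "\<lambda>_. 1"] assms by auto
  hence "sum_list cs \<le> real (length cs)" by (simp add: sum_list_triv)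
  moreover have "0 \<le> sum_list cs" using assms by (intro sum_list_nonneg) auto
  ultimately show "0 \<le> avg_list cs" "avg_list cs \<le> 1"
    using assms by (simp_all add: avg_list_def)
qed

lemma avg_list_map_mono_eps:
  fixes f g :: "'a \<Rightarrow> real"
  assumes "\<And>x. x \<in> set xs \<Longrightarrow> f x - \<epsilon> \<le> g x" "xs \<noteq> []"
  shows "avg_list (map f xs) - \<epsilon> \<le> avg_list (map g xs)"
proof -
  have "sum_list (map (\<lambda>x. f x - \<epsilon>) xs) \<le> sum_list (map g xs)"
    using assms by (intro sum_list_mono) auto
  hence "sum_list (map f xs) - real (length xs) * \<epsilon> \<le> sum_list (map g xs)"
    by (simp add: sum_list_subtractf sum_list_triv)
  hence "(sum_list (map f xs) - real (length xs) * \<epsilon>) / real (length xs)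
           \<le> sum_list (map g xs) / real (length xs)"
    by (intro divide_right_mono) auto
  thus ?thesis using assms(2) by (simp add: avg_list_def diff_divide_distrib)
qed

lemma avg_list_map_one_minus:
  "xs \<noteq> [] \<Longrightarrow> avg_list (map (\<lambda>x. 1 - f x) xs) = 1 - avg_list (map f xs)"
  by (simp add: avg_list_def sum_list_subtractf sum_list_triv diff_divide_distrib)

lemma avg_mset_image_mset_mset: "avg_mset (image_mset f (mset xs)) = avg_list (map f xs)"
  by (simp only: avg_mset_def avg_list_def mset_map[symmetric] sum_mset_sum_list size_mset)

lemma cont_tnorm_range:
  "cont_tnorm tn \<Longrightarrow> 0 \<le> x \<Longrightarrow> x \<le> 1 \<Longrightarrow> 0 \<le> y \<Longrightarrow> y \<le> 1 \<Longrightarrow> 0 \<le> tn x y \<and> tn x y \<le> 1"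
  unfolding cont_tnorm_def by auto

lemma cont_tnorm_continuous_on: "cont_tnorm tn \<Longrightarrow> continuous_on ({0..1} \<times> {0..1}) (\<lambda>(x, y). tn x y)"
  by (simp add: cont_tnorm_def)

lemma continuous_on_unit_square_tendsto:
  fixes f :: "real \<Rightarrow> real \<Rightarrow> real"
  assumes "continuous_on ({0..1} \<times> {0..1}) (\<lambda>(x, y). f x y)" "xs \<longlonglongrightarrow> x0" "ys \<longlonglongrightarrow> y0"
    "\<And>n. xs n \<in> {0..1}" "\<And>n. ys n \<in> {0..1}" "x0 \<in> {0..1}" "y0 \<in> {0..1}"
  shows "(\<lambda>n. f (xs n) (ys n)) \<longlonglongrightarrow> f x0 y0"
proof -
  have "(\<lambda>n. (\<lambda>(x, y). f x y) (xs n, ys n)) \<longlonglongrightarrow> (\<lambda>(x, y). f x y) (x0, y0)"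
    by (rule continuous_on_tendsto_compose[OF assms(1)]) (use assms in \<open>auto intro: tendsto_Pair\<close>)
  thus ?thesis by simp
qed

lemma approx_from_below:
  fixes x0 :: real
  assumes "0 \<le> x0"
  obtains xs :: "nat \<Rightarrow> real" where "xs \<longlonglongrightarrow> x0" "\<And>n. 0 \<le> xs n \<and> xs n \<le> x0 \<and> (xs n = 0 \<or> xs n < x0)"
proof
  define q where "q n = inverse (real (Suc n))" for n
  have q: "0 < q n" "q n \<le> 1" for n by (auto simp: q_def field_simps)
  show "(\<lambda>n. x0 * (1 - q n)) \<longlonglongrightarrow> x0"
    using tendsto_mult[OF tendsto_const tendsto_diff[OF tendsto_const LIMSEQ_inverse_real_of_nat],
        of x0 1]
    by (simp add: q_def)
  show "0 \<le> x0 * (1 - q n) \<and> x0 * (1 - q n) \<le> x0 \<and> (x0 * (1 - q n) = 0 \<or> x0 * (1 - q n) < x0)"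
    for n
    using q[of n] assms mult_left_le[of "1 - q n" x0]
    by (cases "x0 = 0") (auto simp: mult_less_cancel_left1)
qed

lemma approx_from_above:
  fixes x0 :: real
  assumes "x0 \<le> 1"
  obtains xs :: "nat \<Rightarrow> real" where "xs \<longlonglongrightarrow> x0" "\<And>n. x0 \<le> xs n \<and> xs n \<le> 1 \<and> (xs n = 1 \<or> x0 < xs n)"
proof -
  obtain ys where ys: "ys \<longlonglongrightarrow> 1 - x0"
      "\<And>n. 0 \<le> ys n \<and> ys n \<le> 1 - x0 \<and> (ys n = 0 \<or> ys n < 1 - x0)"
    using approx_from_below[of "1 - x0"] assms by auto
  have "(\<lambda>n. 1 - ys n) \<longlonglongrightarrow> 1 - (1 - x0)"
    using tendsto_diff[OF tendsto_const[of 1] ys(1)] .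
  then show thesis
  proof (intro that[of "\<lambda>n. 1 - ys n"])
    show "x0 \<le> 1 - ys n \<and> 1 - ys n \<le> 1 \<and> (1 - ys n = 1 \<or> x0 < 1 - ys n)" for n
      using ys(2)[of n] by auto
  qed simp
qed

lemma continuous_on_unit_square_le_of_below:
  fixes f :: "real \<Rightarrow> real \<Rightarrow> real"
  assumes "continuous_on ({0..1} \<times> {0..1}) (\<lambda>(x, y). f x y)" "0 \<le> x0" "x0 \<le> 1" "0 \<le> y0" "y0 \<le> 1"
    and H: "\<And>x y. 0 \<le> x \<Longrightarrow> x = 0 \<or> x < x0 \<Longrightarrow> 0 \<le> y \<Longrightarrow> y = 0 \<or> y < y0 \<Longrightarrow> f x y \<le> K"
  shows "f x0 y0 \<le> K"
proof -
  obtain xs where xs: "xs \<longlonglongrightarrow> x0" "\<And>n. 0 \<le> xs n \<and> xs n \<le> x0 \<and> (xs n = 0 \<or> xs n < x0)"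
    using approx_from_below[OF assms(2)] by metis
  obtain ys where ys: "ys \<longlonglongrightarrow> y0" "\<And>n. 0 \<le> ys n \<and> ys n \<le> y0 \<and> (ys n = 0 \<or> ys n < y0)"
    using approx_from_below[OF assms(4)] by metis
  have "xs n \<in> {0..1}" "ys n \<in> {0..1}" for n
    using xs(2)[of n] ys(2)[of n] assms by auto
  then have "(\<lambda>n. f (xs n) (ys n)) \<longlonglongrightarrow> f x0 y0"
    by (intro continuous_on_unit_square_tendsto[OF assms(1) xs(1) ys(1)]) (use assms in auto)
  moreover have "\<forall>n. f (xs n) (ys n) \<le> K" using H xs(2) ys(2) by blast
  ultimately show ?thesis by (intro LIMSEQ_le_const2) auto
qed

lemma continuous_on_unit_square_ge_of_above:
  fixes f :: "real \<Rightarrow> real \<Rightarrow> real"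
  assumes "continuous_on ({0..1} \<times> {0..1}) (\<lambda>(x, y). f x y)" "0 \<le> x0" "x0 \<le> 1" "0 \<le> y0" "y0 \<le> 1"
    and H: "\<And>x y. x \<le> 1 \<Longrightarrow> x = 1 \<or> x0 < x \<Longrightarrow> y \<le> 1 \<Longrightarrow> y = 1 \<or> y0 < y \<Longrightarrow> K \<le> f x y"
  shows "K \<le> f x0 y0"
proof -
  obtain xs where xs: "xs \<longlonglongrightarrow> x0" "\<And>n. x0 \<le> xs n \<and> xs n \<le> 1 \<and> (xs n = 1 \<or> x0 < xs n)"
    using approx_from_above[OF assms(3)] by metis
  obtain ys where ys: "ys \<longlonglongrightarrow> y0" "\<And>n. y0 \<le> ys n \<and> ys n \<le> 1 \<and> (ys n = 1 \<or> y0 < ys n)"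
    using approx_from_above[OF assms(5)] by metis
  have "xs n \<in> {0..1}" "ys n \<in> {0..1}" for n
    using xs(2)[of n] ys(2)[of n] assms by auto
  then have "(\<lambda>n. f (xs n) (ys n)) \<longlonglongrightarrow> f x0 y0"
    by (intro continuous_on_unit_square_tendsto[OF assms(1) xs(1) ys(1)]) (use assms in auto)
  moreover have "\<forall>n. K \<le> f (xs n) (ys n)" using H xs(2) ys(2) by blast
  ultimately show ?thesis by (intro LIMSEQ_le_const) auto
qed

lemma dense_le_nonneg:
  fixes x y :: real
  assumes "\<And>d. 0 \<le> d \<Longrightarrow> d < x \<Longrightarrow> d \<le> y" "0 \<le> y"
  shows "x \<le> y"
proof (rule dense_le)
  fix d assume "d < x" thus "d \<le> y" using assms by (cases "0 \<le> d") auto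
qed

section \<open>Derivations\<close>

lemma wf_fm_Conjs [simp]: "wf_fm (Conjs xs B) \<longleftrightarrow> (\<forall>x\<in>set xs. wf_fm x) \<and> wf_fm B"
  by (induction xs) auto

lemma lgim_ax_wf:
  assumes "lgim_ax tn A" "cont_tnorm tn"
  shows "wf_fm A"
  using assms(1)
proof cases
  case (transM1 as n bs cs d g)
  then have "cs \<noteq> []" by auto
  with transM1 show ?thesis using avg_list_bounds[of cs]
    by (auto simp: Imp_def G1_def luk_t_def set_zip)
next
  case (transM3 as n cs d b)
  then have "cs \<noteq> []" by auto
  with transM3 show ?thesis using avg_list_bounds[of cs]
    by (auto simp: Imp_def G1_def luk_s_def set_zip)
next
  case (odot1 c d a b)
  then show ?thesis using cont_tnorm_range[OF assms(2), of c d] by (auto simp: Imp_def G1_def)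
next
  case (odot2 c d a b)
  then show ?thesis using cont_tnorm_range[OF assms(2), of "1 - c" "1 - d"]
    by (auto simp: Imp_def G1_def tconorm_def)
qed (auto simp: Imp_def G1_def luk_t_def luk_s_def)

lemma derivable_wf: "derivable tn S A \<Longrightarrow> cont_tnorm tn \<Longrightarrow> \<forall>X\<in>S. wf_fm X \<Longrightarrow> wf_fm A"
  by (induction rule: derivable.induct) (auto intro: lgim_ax_wf simp: Imp_def)

lemma derivable_mono: "derivable tn S A \<Longrightarrow> S \<subseteq> S' \<Longrightarrow> derivable tn S' A"
  by (induction rule: derivable.induct) (auto intro: derivable.intros)

lemma derivable_finite_subset:
  "derivable tn S A \<Longrightarrow> \<exists>S0. finite S0 \<and> S0 \<subseteq> S \<and> derivable tn S0 A"
proof (induction rule: derivable.induct)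
  case (ax A) then show ?case by (auto intro: derivable.ax)
next
  case (hyp A) then show ?case by (intro exI[of _ "{A}"]) (auto intro: derivable.hyp)
next
  case (mp A B)
  then obtain S1 S2 where "finite S1" "S1 \<subseteq> S" "derivable tn S1 A"
    "finite S2" "S2 \<subseteq> S" "derivable tn S2 (Imp A B)"
    by blast
  then show ?case by (intro exI[of _ "S1 \<union> S2"]) (auto intro: derivable.mp derivable_mono)
qed

lemma derivable_cut: "derivable tn (insert C S) B \<Longrightarrow> derivable tn S C \<Longrightarrow> derivable tn S B"
  by (induction rule: derivable.induct) (auto intro: derivable.intros)

lemma derivable_taut: "wf_fm A \<Longrightarrow> taut A \<Longrightarrow> derivable tn S A"
  by (auto intro: derivable.ax lgim_ax.taut)

lemma deduction_theorem:
  assumes "derivable tn (insert C S) B" "cont_tnorm tn" "\<forall>X\<in>S. wf_fm X" "wf_fm C"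
  shows "derivable tn S (Imp C B)"
  using assms(1)
proof (induction rule: derivable.induct)
  case (ax A)
  have "wf_fm A" using ax lgim_ax_wf assms by blast
  hence "derivable tn S (Imp A (Imp C A))"
    using assms by (intro derivable_taut) (auto simp: Imp_def taut_def)
  then show ?case using ax by (blast intro: derivable.intros)
next
  case (hyp A)
  show ?case
  proof (cases "A = C")
    case True
    then show ?thesis using assms by (intro derivable_taut) (auto simp: Imp_def taut_def)
  next
    case False
    hence "A \<in> S" using hyp by auto
    hence "derivable tn S (Imp A (Imp C A))"
      using assms by (intro derivable_taut) (auto simp: Imp_def taut_def)
    then show ?thesis using \<open>A \<in> S\<close> by (blast intro: derivable.intros)
  qed
next
  case (mp A B)
  have "wf_fm A" "wf_fm B"
    using derivable_wf[OF mp(2) assms(2)] derivable_wf[OF mp(1) assms(2)] assms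
    by (auto simp: Imp_def)
  hence "derivable tn S (Imp (Imp C A) (Imp (Imp C (Imp A B)) (Imp C B)))"
    using assms by (intro derivable_taut) (auto simp: Imp_def taut_def)
  then show ?case using mp by (blast intro: derivable.intros)
qed

section \<open>Maximal non-deriving sets\<close>

text \<open>Maximality is only among sets of well-formed formulas: the tautology axiom is restricted
  to well-formed instances, so the deduction theorem needs well-formed hypotheses.\<close>

locale maximal_nonderiving =
  fixes tn :: "real \<Rightarrow> real \<Rightarrow> real" and \<Gamma> :: "fm set" and goal :: fm
  assumes tnorm: "cont_tnorm tn"
    and wf_\<Gamma>: "\<forall>X\<in>\<Gamma>. wf_fm X"
    and wf_goal: "wf_fm goal"
    and not_derivable_goal: "\<not> derivable tn \<Gamma> goal"
    and maximal: "\<And>S. \<Gamma> \<subseteq> S \<Longrightarrow> \<forall>X\<in>S. wf_fm X \<Longrightarrow> \<not> derivable tn S goal \<Longrightarrow> S = \<Gamma>"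

lemma lindenbaum:
  assumes "cont_tnorm tn" "\<forall>X\<in>T. wf_fm X" "wf_fm goal" "\<not> derivable tn T goal"
  obtains G where "T \<subseteq> G" "maximal_nonderiving tn G goal"
proof -
  define \<A> where "\<A> = {S. T \<subseteq> S \<and> (\<forall>X\<in>S. wf_fm X) \<and> \<not> derivable tn S goal}"
  have "\<exists>G\<in>\<A>. \<forall>X\<in>\<A>. G \<subseteq> X \<longrightarrow> X = G"
  proof (rule subset_Zorn_nonempty)
    show "\<A> \<noteq> {}" using assms by (auto simp: \<A>_def)
  next
    fix \<C> assume C: "\<C> \<noteq> {}" "subset.chain \<A> \<C>"
    have sub: "\<C> \<subseteq> \<A>" using C(2) by (auto simp: subset.chain_def)
    have "\<not> derivable tn (\<Union>\<C>) goal"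
    proof
      assume "derivable tn (\<Union>\<C>) goal"
      then obtain S0 where S0: "finite S0" "S0 \<subseteq> \<Union>\<C>" "derivable tn S0 goal"
        using derivable_finite_subset by blast
      obtain B where "B \<in> \<C>" "S0 \<subseteq> B"
        using finite_subset_Union_chain[OF S0(1,2) C] by blast
      thus False using derivable_mono[OF S0(3)] sub by (auto simp: \<A>_def)
    qed
    thus "\<Union>\<C> \<in> \<A>" using C(1) sub by (auto simp: \<A>_def)
  qed
  then show thesis using that assms by (auto simp: \<A>_def maximal_nonderiving_def)
qed

context maximal_nonderiving
begin

lemma derivable_mem: assumes "derivable tn \<Gamma> A" shows "A \<in> \<Gamma>"
proof -
  have "\<not> derivable tn (insert A \<Gamma>) goal"
    using derivable_cut[of tn A \<Gamma> goal] assms not_derivable_goal by blast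
  thus ?thesis using maximal[of "insert A \<Gamma>"] derivable_wf[OF assms tnorm wf_\<Gamma>] wf_\<Gamma> by auto
qed

lemma lgim_ax_mem: "lgim_ax tn A \<Longrightarrow> A \<in> \<Gamma>"
  by (rule derivable_mem) (rule derivable.ax)

lemma taut_mem: "wf_fm A \<Longrightarrow> taut A \<Longrightarrow> A \<in> \<Gamma>"
  by (intro derivable_mem derivable_taut)

lemma mp_mem: "A \<in> \<Gamma> \<Longrightarrow> Imp A B \<in> \<Gamma> \<Longrightarrow> B \<in> \<Gamma>"
  by (rule derivable_mem) (meson derivable.hyp derivable.mp)

lemma goal_not_mem: "goal \<notin> \<Gamma>"
  using not_derivable_goal by (blast intro: derivable.hyp)

lemma derivable_Imp_goal_of_not_mem:
  assumes "wf_fm A" "A \<notin> \<Gamma>"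
  shows "derivable tn \<Gamma> (Imp A goal)"
proof -
  have "derivable tn (insert A \<Gamma>) goal" using maximal[of "insert A \<Gamma>"] assms wf_\<Gamma> by auto
  thus ?thesis using deduction_theorem tnorm wf_\<Gamma> assms by blast
qed

lemma FOr_mem: assumes "FOr A B \<in> \<Gamma>" shows "A \<in> \<Gamma> \<or> B \<in> \<Gamma>"
proof (rule ccontr)
  assume "\<not> (A \<in> \<Gamma> \<or> B \<in> \<Gamma>)"
  moreover have wf: "wf_fm A" "wf_fm B" using wf_\<Gamma> assms by auto
  ultimately have "derivable tn \<Gamma> (Imp A goal)" "derivable tn \<Gamma> (Imp B goal)"
    using derivable_Imp_goal_of_not_mem by auto
  moreover have "derivable tn \<Gamma> (Imp (FOr A B) (Imp (Imp A goal) (Imp (Imp B goal) goal)))"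
    using wf wf_goal by (intro derivable_taut) (auto simp: Imp_def taut_def)
  ultimately have "derivable tn \<Gamma> goal" using assms by (meson derivable.hyp derivable.mp)
  thus False using not_derivable_goal by blast
qed

lemma FNot_mem: assumes "FNot A \<in> \<Gamma>" shows "A \<notin> \<Gamma>"
proof
  assume "A \<in> \<Gamma>"
  have "derivable tn \<Gamma> (Imp A (Imp (FNot A) goal))"
    using wf_\<Gamma> assms wf_goal by (intro derivable_taut) (auto simp: Imp_def taut_def)
  hence "derivable tn \<Gamma> goal" using \<open>A \<in> \<Gamma>\<close> assms by (meson derivable.hyp derivable.mp)
  thus False using not_derivable_goal by blast
qed

lemma FAnd_mem: assumes "A \<in> \<Gamma>" "B \<in> \<Gamma>" shows "FAnd A B \<in> \<Gamma>"
proof -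
  have "Imp A (Imp B (FAnd A B)) \<in> \<Gamma>"
    using wf_\<Gamma> assms by (intro taut_mem) (auto simp: Imp_def taut_def)
  thus ?thesis using assms mp_mem by blast
qed

lemma Conjs_mem: "\<forall>x\<in>set xs. x \<in> \<Gamma> \<Longrightarrow> B \<in> \<Gamma> \<Longrightarrow> Conjs xs B \<in> \<Gamma>"
  by (induction xs) (auto intro: FAnd_mem)

lemma lgim_ax_mp_mem: "lgim_ax tn (Imp X Z) \<Longrightarrow> X \<in> \<Gamma> \<Longrightarrow> Z \<in> \<Gamma>"
  using lgim_ax_mem mp_mem by blast

lemma lgim_ax_mp2_mem: "lgim_ax tn (Imp (FAnd X Y) Z) \<Longrightarrow> X \<in> \<Gamma> \<Longrightarrow> Y \<in> \<Gamma> \<Longrightarrow> Z \<in> \<Gamma>"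
  using lgim_ax_mp_mem FAnd_mem by blast

lemma G1_mem_grade: "G1 a c b \<in> \<Gamma> \<Longrightarrow> 0 \<le> c \<and> c \<le> 1"
  using wf_\<Gamma> by (auto simp: G1_def)

lemma GImp_mem_lower:
  assumes "GImp N c b \<in> \<Gamma>" "0 \<le> c'" "c' \<le> c"
  shows "GImp N c' b \<in> \<Gamma>"
proof -
  have wf: "N \<noteq> {#}" "0 \<le> c" "c \<le> 1" using wf_\<Gamma> assms by auto
  have "G1 b (1 - c + c') b \<in> \<Gamma>" using assms wf by (intro lgim_ax_mem lgim_ax.refl) auto
  hence "GImp N (luk_t c (1 - c + c')) b \<in> \<Gamma>"
    using assms wf by (intro lgim_ax_mp2_mem[OF lgim_ax.transM2]) auto
  moreover have "luk_t c (1 - c + c') = c'" using assms by (simp add: luk_t_def)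
  ultimately show ?thesis by simp
qed

lemma G1_mem_lower: "G1 a c b \<in> \<Gamma> \<Longrightarrow> 0 \<le> c' \<Longrightarrow> c' \<le> c \<Longrightarrow> G1 a c' b \<in> \<Gamma>"
  unfolding G1_def by (rule GImp_mem_lower)

lemma G1_mem_trans: "G1 a c b \<in> \<Gamma> \<Longrightarrow> G1 b d g \<in> \<Gamma> \<Longrightarrow> G1 a (luk_t c d) g \<in> \<Gamma>"
proof -
  assume "G1 a c b \<in> \<Gamma>" "G1 b d g \<in> \<Gamma>"
  moreover from this have "0 \<le> c" "c \<le> 1" "0 \<le> d" "d \<le> 1" using G1_mem_grade by auto
  ultimately show ?thesis by (intro lgim_ax_mp2_mem[OF lgim_ax.trans1])
qed

lemma G1_Top_Bot_mem_grade: assumes "G1 Top c Bot \<in> \<Gamma>" shows "c \<le> 0"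
proof (rule ccontr)
  assume "\<not> c \<le> 0"
  hence "FNot (G1 Top c Bot) \<in> \<Gamma>" using G1_mem_grade[OF assms] by (intro lgim_ax_mem lgim_ax.inkons) auto
  thus False using FNot_mem assms by blast
qed

section \<open>The canonical evaluation\<close>

definition cval :: "bexp \<Rightarrow> real" where
  "cval a = Sup {d. 0 \<le> d \<and> d \<le> 1 \<and> G1 Top d a \<in> \<Gamma>}"

definition cvaluation :: "nat \<Rightarrow> real" where
  "cvaluation i = cval (Var i)"

lemma cval_set_nonempty: "{d. 0 \<le> d \<and> d \<le> 1 \<and> G1 Top d a \<in> \<Gamma>} \<noteq> {}"
proof -
  have "0 \<in> {d. 0 \<le> d \<and> d \<le> 1 \<and> G1 Top d a \<in> \<Gamma>}" using lgim_ax_mem[OF lgim_ax.zero] by simp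
  thus ?thesis by blast
qed

lemma cval_ge: "G1 Top d a \<in> \<Gamma> \<Longrightarrow> d \<le> cval a"
  unfolding cval_def using G1_mem_grade by (intro cSup_upper bdd_aboveI[of _ 1]) auto

lemma cval_le: "(\<And>d. 0 \<le> d \<Longrightarrow> d \<le> 1 \<Longrightarrow> G1 Top d a \<in> \<Gamma> \<Longrightarrow> d \<le> x) \<Longrightarrow> cval a \<le> x"
  unfolding cval_def by (rule cSup_least) (use cval_set_nonempty[of a] in auto)

lemma cval_nonneg: "0 \<le> cval a"
  using cval_ge[OF lgim_ax_mem[OF lgim_ax.zero]] .

lemma cval_le_one: "cval a \<le> 1"
  by (rule cval_le) auto

lemma G1_Top_mem_below_cval:
  assumes "0 \<le> d" "d = 0 \<or> d < cval a"
  shows "G1 Top d a \<in> \<Gamma>"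
proof (cases "d = 0")
  case True then show ?thesis using lgim_ax_mem[OF lgim_ax.zero] by simp
next
  case False
  then obtain d' where "d' \<in> {d. 0 \<le> d \<and> d \<le> 1 \<and> G1 Top d a \<in> \<Gamma>}" "d < d'"
    using less_cSupD[OF cval_set_nonempty] assms unfolding cval_def by blast
  thus ?thesis using G1_mem_lower assms by auto
qed

lemma cval_le_of_G1_Bot_mem: assumes "G1 a p Bot \<in> \<Gamma>" shows "cval a \<le> 1 - p"
proof (rule cval_le)
  fix x assume "0 \<le> x" "G1 Top x a \<in> \<Gamma>"
  hence "luk_t x p \<le> 0" using G1_mem_trans assms G1_Top_Bot_mem_grade by blast
  thus "x \<le> 1 - p" by (simp add: luk_t_def)
qed

lemma G1_Bot_mem_above_cval:
  assumes "0 \<le> p" "p = 0 \<or> p < 1 - cval a"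
  shows "G1 a p Bot \<in> \<Gamma>"
proof (cases "p = 0")
  case True then show ?thesis using lgim_ax_mem[OF lgim_ax.zero] by simp
next
  case False
  have "FOr (G1 Top (1 - p) a) (G1 a (1 - (1 - p)) Bot) \<in> \<Gamma>"
    using assms cval_nonneg[of a] by (intro lgim_ax_mem lgim_ax.lin2) auto
  moreover have "G1 Top (1 - p) a \<notin> \<Gamma>" using cval_ge[of "1 - p" a] assms False by auto
  ultimately show ?thesis using FOr_mem by auto
qed

lemma cval_Bot: "cval Bot = 0"
  using cval_le_of_G1_Bot_mem[OF lgim_ax_mem[OF lgim_ax.bot]] cval_nonneg[of Bot] by simp

lemma cval_Top: "cval Top = 1"
  using cval_ge[OF lgim_ax_mem[OF lgim_ax.refl[where c=1 and a=Top]]] cval_le_one[of Top] by simp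

lemma cval_mono_of_G1_one_mem: assumes "G1 a 1 b \<in> \<Gamma>" shows "cval a \<le> cval b"
proof (rule cval_le)
  fix d assume "0 \<le> d" "d \<le> 1" "G1 Top d a \<in> \<Gamma>"
  with cval_ge[OF G1_mem_trans[OF this(3) assms]] show "d \<le> cval b" by simp
qed

lemma cval_And: "cval (And a b) = min (cval a) (cval b)"
proof (rule antisym)
  show "cval (And a b) \<le> min (cval a) (cval b)"
    using cval_mono_of_G1_one_mem lgim_ax_mem[OF lgim_ax.and2] lgim_ax_mem[OF lgim_ax.and3]
    by simp
  show "min (cval a) (cval b) \<le> cval (And a b)"
  proof (rule dense_le_nonneg)
    fix d assume d: "0 \<le> d" "d < min (cval a) (cval b)"
    hence "G1 Top d a \<in> \<Gamma>" "G1 Top d b \<in> \<Gamma>" "d \<le> 1"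
      using G1_Top_mem_below_cval[of d] cval_le_one[of a] by auto
    hence "G1 Top d (And a b) \<in> \<Gamma>" using d by (intro lgim_ax_mp2_mem[OF lgim_ax.and1]) auto
    thus "d \<le> cval (And a b)" by (rule cval_ge)
  qed (rule cval_nonneg)
qed

lemma cval_Or: "cval (Or a b) = max (cval a) (cval b)"
proof (rule antisym)
  show "max (cval a) (cval b) \<le> cval (Or a b)"
    using cval_mono_of_G1_one_mem lgim_ax_mem[OF lgim_ax.or2] lgim_ax_mem[OF lgim_ax.or3]
    by simp
  have "1 - max (cval a) (cval b) \<le> 1 - cval (Or a b)"
  proof (rule dense_le_nonneg)
    fix p assume p: "0 \<le> p" "p < 1 - max (cval a) (cval b)"
    hence "p < 1 - cval a" "p < 1 - cval b" by auto
    hence "G1 a p Bot \<in> \<Gamma>" "G1 b p Bot \<in> \<Gamma>" "p \<le> 1"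
      using G1_Bot_mem_above_cval[OF p(1)] cval_nonneg[of a] by auto
    hence "G1 (Or a b) p Bot \<in> \<Gamma>" using p by (intro lgim_ax_mp2_mem[OF lgim_ax.or1]) auto
    from cval_le_of_G1_Bot_mem[OF this] show "p \<le> 1 - cval (Or a b)" by simp
  qed (use cval_le_one in auto)
  thus "cval (Or a b) \<le> max (cval a) (cval b)" by simp
qed

lemma G1_Top_Neg_Bot_mem: "G1 Top 1 (Neg Bot) \<in> \<Gamma>"
proof -
  have "G1 (Neg (Neg Top)) 1 (Neg Bot) \<in> \<Gamma>"
    by (intro lgim_ax_mp_mem[OF lgim_ax.neg1] lgim_ax_mem[OF lgim_ax.bot]) auto
  from G1_mem_trans[OF lgim_ax_mem[OF lgim_ax.neg3] this] show ?thesis by simp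
qed

lemma G1_Neg_Top_Bot_mem: "G1 (Neg Top) 1 Bot \<in> \<Gamma>"
proof -
  have "G1 (Neg Top) 1 (Neg (Neg Bot)) \<in> \<Gamma>"
    by (intro lgim_ax_mp_mem[OF lgim_ax.neg1] lgim_ax_mem[OF lgim_ax.top]) auto
  from G1_mem_trans[OF this lgim_ax_mem[OF lgim_ax.neg2]] show ?thesis by simp
qed

lemma cval_Neg: "cval (Neg a) = 1 - cval a"
proof (rule antisym)
  show "cval (Neg a) \<le> 1 - cval a"
  proof (rule cval_le)
    fix d assume d: "0 \<le> d" "d \<le> 1" "G1 Top d (Neg a) \<in> \<Gamma>"
    hence "G1 (Neg (Neg a)) d (Neg Top) \<in> \<Gamma>" by (intro lgim_ax_mp_mem[OF lgim_ax.neg1]) auto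
    hence "G1 a (luk_t 1 d) (Neg Top) \<in> \<Gamma>"
      using G1_mem_trans[OF lgim_ax_mem[OF lgim_ax.neg3]] by blast
    hence "G1 a (luk_t (luk_t 1 d) 1) Bot \<in> \<Gamma>" using G1_mem_trans G1_Neg_Top_Bot_mem by blast
    from cval_le_of_G1_Bot_mem[OF this] show "d \<le> 1 - cval a" using d by simp
  qed
  show "1 - cval a \<le> cval (Neg a)"
  proof (rule dense_le_nonneg)
    fix d assume d: "0 \<le> d" "d < 1 - cval a"
    hence "G1 a d Bot \<in> \<Gamma>" "d \<le> 1" using G1_Bot_mem_above_cval[of d a] cval_nonneg[of a] by auto
    hence "G1 (Neg Bot) d (Neg a) \<in> \<Gamma>" using d by (intro lgim_ax_mp_mem[OF lgim_ax.neg1]) auto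
    hence "G1 Top (luk_t 1 d) (Neg a) \<in> \<Gamma>" using G1_mem_trans G1_Top_Neg_Bot_mem by blast
    thus "d \<le> cval (Neg a)" using cval_ge d by simp
  qed (rule cval_nonneg)
qed

text \<open>Axioms odot1 and odot2 only bound cval (Odot a b) by values of the t-norm at grades
  strictly inside the approximating sets; continuity closes the gap.\<close>

lemma cval_Odot: "cval (Odot a b) = tn (cval a) (cval b)"
proof (rule antisym)
  note cont = cont_tnorm_continuous_on[OF tnorm]
  show "tn (cval a) (cval b) \<le> cval (Odot a b)"
  proof (rule continuous_on_unit_square_le_of_below[OF cont cval_nonneg cval_le_one cval_nonneg cval_le_one])
    fix x y assume xy: "0 \<le> x" "x = 0 \<or> x < cval a" "0 \<le> y" "y = 0 \<or> y < cval b"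
    hence "G1 Top x a \<in> \<Gamma>" "G1 Top y b \<in> \<Gamma>" "x \<le> 1" "y \<le> 1"
      using G1_Top_mem_below_cval[of x a] G1_Top_mem_below_cval[of y b]
        cval_le_one[of a] cval_le_one[of b] by auto
    hence "G1 Top (tn x y) (Odot a b) \<in> \<Gamma>"
      using xy by (intro lgim_ax_mp2_mem[OF lgim_ax.odot1]) auto
    thus "tn x y \<le> cval (Odot a b)" by (rule cval_ge)
  qed
  show "cval (Odot a b) \<le> tn (cval a) (cval b)"
  proof (rule continuous_on_unit_square_ge_of_above[OF cont cval_nonneg cval_le_one cval_nonneg cval_le_one])
    fix x y assume xy: "x \<le> 1" "x = 1 \<or> cval a < x" "y \<le> 1" "y = 1 \<or> cval b < y"
    hence "G1 a (1 - x) Bot \<in> \<Gamma>" "G1 b (1 - y) Bot \<in> \<Gamma>" "0 \<le> x" "0 \<le> y"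
      using G1_Bot_mem_above_cval[of "1 - x" a] G1_Bot_mem_above_cval[of "1 - y" b]
        cval_nonneg[of a] cval_nonneg[of b] by auto
    hence "G1 (Odot a b) (tconorm tn (1 - x) (1 - y)) Bot \<in> \<Gamma>"
      using xy by (intro lgim_ax_mp2_mem[OF lgim_ax.odot2]) auto
    hence "cval (Odot a b) \<le> 1 - tconorm tn (1 - x) (1 - y)" by (rule cval_le_of_G1_Bot_mem)
    thus "cval (Odot a b) \<le> tn x y" by (simp add: tconorm_def)
  qed
qed

lemma beval_cvaluation: "beval tn cvaluation = cval"
proof
  show "beval tn cvaluation a = cval a" for a
    by (induction a) (simp_all add: cvaluation_def cval_Bot cval_Top cval_And cval_Or cval_Neg cval_Odot)
qed

lemma valuation_cvaluation: "valuation cvaluation"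
  using cval_nonneg cval_le_one by (auto simp: valuation_def cvaluation_def)

text \<open>Chain the implications Top \<Rightarrow> a_i at grades cval a_i - \<epsilon> with the member of \<Gamma>
  by axiom transM1, then collapse the copies of Top by axiom topM.\<close>

lemma avg_cval_le_of_mem:
  assumes mem: "GImp (mset ns) c b \<in> \<Gamma>" and \<epsilon>: "0 < \<epsilon>"
  shows "avg_list (map cval ns) \<le> cval b + 1 - c + \<epsilon>"
proof -
  have wf: "ns \<noteq> []" "0 \<le> c" "c \<le> 1" using wf_\<Gamma> mem by auto
  define n where "n = length ns"
  define cs where "cs = map (\<lambda>x. max 0 (cval x - \<epsilon>)) ns"
  have "0 \<le> max 0 (cval x - \<epsilon>) \<and> max 0 (cval x - \<epsilon>) \<le> 1" for x
    using cval_le_one[of x] \<epsilon> by auto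
  hence cs: "\<forall>d\<in>set cs. 0 \<le> d \<and> d \<le> 1" "cs \<noteq> []"
    using wf by (auto simp: cs_def)
  have "G1 Top (max 0 (cval x - \<epsilon>)) x \<in> \<Gamma>" for x
    by (rule G1_Top_mem_below_cval) (use \<epsilon> in \<open>auto simp: max_def\<close>)
  moreover have "map (\<lambda>(a, c, b). G1 a c b) (zip (replicate n Top) (zip cs ns))
      = map (\<lambda>x. G1 Top (max 0 (cval x - \<epsilon>)) x) ns"
    by (simp add: cs_def n_def zip_replicate1 zip_map1 zip_same_conv_map)
  ultimately have "Conjs (map (\<lambda>(a, c, b). G1 a c b) (zip (replicate n Top) (zip cs ns)))
      (GImp (mset ns) c b) \<in> \<Gamma>"
    using mem by (intro Conjs_mem) auto
  hence "GImp (mset (replicate n Top)) (luk_t (avg_list cs) c) b \<in> \<Gamma>"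
    using cs wf by (intro lgim_ax_mp_mem[OF lgim_ax.transM1]) (auto simp: cs_def n_def Suc_le_eq)
  moreover have "0 \<le> luk_t (avg_list cs) c" "luk_t (avg_list cs) c \<le> 1"
    using avg_list_bounds[OF cs] wf by (auto simp: luk_t_def)
  ultimately have "G1 Top (luk_t (avg_list cs) c) b \<in> \<Gamma>"
    using wf by (intro lgim_ax_mp_mem[OF lgim_ax.topM]) (auto simp: n_def Suc_le_eq)
  hence "luk_t (avg_list cs) c \<le> cval b" by (rule cval_ge)
  hence "avg_list cs + c - 1 \<le> cval b" by (simp add: luk_t_def)
  moreover have "avg_list (map cval ns) - \<epsilon> \<le> avg_list cs"
    unfolding cs_def by (rule avg_list_map_mono_eps) (use wf in auto)
  ultimately show ?thesis by simp
qed

lemma sat_cvaluation_of_mem: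
  assumes "GImp N c b \<in> \<Gamma>"
  shows "sat tn cvaluation (GImp N c b)"
proof -
  obtain ns where ns: "mset ns = N" using ex_mset by blast
  with assms have "avg_list (map cval ns) \<le> cval b + 1 - c"
    by (auto intro: field_le_epsilon avg_cval_le_of_mem)
  thus ?thesis using ns[symmetric] by (simp add: beval_cvaluation avg_mset_image_mset_mset)
qed

text \<open>Combine a_i \<Rightarrow> Bot at grades 1 - cval a_i - \<epsilon> with Top \<Rightarrow> g at grade cval g - \<epsilon> by
  axiom transM3; the slack e - t = 2\<epsilon> absorbs both losses.\<close>

lemma GImp_mem_of_sat_cvaluation:
  assumes "sat tn cvaluation (GImp N e g)" "N \<noteq> {#}" "0 \<le> t" "t < e" "e \<le> 1"
  shows "GImp N t g \<in> \<Gamma>"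
proof -
  obtain ms where ms: "mset ms = N" using ex_mset by blast
  have "ms \<noteq> []" using ms assms(2) by auto
  define \<epsilon> where "\<epsilon> = (e - t) / 2"
  have \<epsilon>: "0 < \<epsilon>" using assms by (simp add: \<epsilon>_def)
  define cs where "cs = map (\<lambda>x. max 0 (1 - cval x - \<epsilon>)) ms"
  define q where "q = max 0 (cval g - \<epsilon>)"
  have "0 \<le> max 0 (1 - cval x - \<epsilon>) \<and> max 0 (1 - cval x - \<epsilon>) \<le> 1" for x
    using cval_nonneg[of x] \<epsilon> by auto
  hence cs: "\<forall>c\<in>set cs. 0 \<le> c \<and> c \<le> 1" by (auto simp: cs_def)
  have q: "0 \<le> q" "q \<le> 1" using cval_le_one[of g] \<epsilon> by (auto simp: q_def)
  have "G1 x (max 0 (1 - cval x - \<epsilon>)) Bot \<in> \<Gamma>" for x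
    by (rule G1_Bot_mem_above_cval) (use \<epsilon> in \<open>auto simp: max_def\<close>)
  moreover have "G1 Top q g \<in> \<Gamma>"
    unfolding q_def by (rule G1_Top_mem_below_cval) (use \<epsilon> in \<open>auto simp: max_def\<close>)
  moreover have "map (\<lambda>(a, c). G1 a c Bot) (zip ms cs)
      = map (\<lambda>x. G1 x (max 0 (1 - cval x - \<epsilon>)) Bot) ms"
    by (simp add: cs_def zip_map2 zip_same_conv_map)
  ultimately have "Conjs (map (\<lambda>(a, c). G1 a c Bot) (zip ms cs)) (G1 Top q g) \<in> \<Gamma>"
    by (intro Conjs_mem) auto
  hence mem: "GImp (mset ms) (luk_s (avg_list cs) q) g \<in> \<Gamma>"
    using cs q \<open>ms \<noteq> []\<close>
    by (intro lgim_ax_mp_mem[OF lgim_ax.transM3]) (auto simp: cs_def Suc_le_eq)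
  have "avg_list (map (\<lambda>x. 1 - cval x) ms) - \<epsilon> \<le> avg_list cs"
    unfolding cs_def by (rule avg_list_map_mono_eps) (use \<open>ms \<noteq> []\<close> in auto)
  hence "1 - avg_list (map cval ms) - \<epsilon> \<le> avg_list cs"
    using \<open>ms \<noteq> []\<close> by (simp add: avg_list_map_one_minus)
  moreover have "avg_list (map cval ms) \<le> cval g + 1 - e"
    using assms(1) ms[symmetric] by (simp add: beval_cvaluation avg_mset_image_mset_mset)
  moreover have "cval g - \<epsilon> \<le> q" by (simp add: q_def)
  ultimately have "t \<le> avg_list cs + q" by (simp add: \<epsilon>_def field_simps)
  hence "t \<le> luk_s (avg_list cs) q" using assms(4,5) by (simp add: luk_s_def)
  thus ?thesis using GImp_mem_lower[OF mem assms(3)] ms by simp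
qed

end

theorem mainTheorem9:
  fixes tn :: "real \<Rightarrow> real \<Rightarrow> real" and T :: "fm set"
    and M :: "bexp multiset" and e t :: real and \<eta> :: bexp
  assumes "cont_tnorm tn"
    and "\<forall>A\<in>T. wf_fm A \<and> (\<exists>N c b. A = GImp N c b)"
    and "M \<noteq> {#}" and "0 \<le> e" and "e \<le> 1"
    and "entails tn T (GImp M e \<eta>)"
    and "0 \<le> t" and "t < e"
  shows "derivable tn T (GImp M t \<eta>)"
proof (rule ccontr)
  assume "\<not> derivable tn T (GImp M t \<eta>)"
  moreover have "\<forall>X\<in>T. wf_fm X" "wf_fm (GImp M t \<eta>)" using assms by auto
  ultimately obtain G where G: "T \<subseteq> G" "maximal_nonderiving tn G (GImp M t \<eta>)"
    using lindenbaum assms(1) by blast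
  interpret maximal_nonderiving tn G "GImp M t \<eta>" by (rule G(2))
  have "\<forall>B\<in>T. sat tn cvaluation B" using assms(2) G(1) sat_cvaluation_of_mem by force
  hence "sat tn cvaluation (GImp M e \<eta>)"
    using assms(6) valuation_cvaluation by (simp add: entails_def)
  hence "GImp M t \<eta> \<in> G" using assms by (intro GImp_mem_of_sat_cvaluation) auto
  thus False using goal_not_mem by blast
qed

end
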